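(* There exists $C>0$ such that for every $R\ge1$, every $y_0\in\mathbb R$, with $\psi_0:=\psi_R(\cdot-y_0)$, and every real-valued $f\in H^2(\mathbb R)$: $$2\|f\|^2_{H^1(\psi_0dx)}+\frac{C}{R^2}\|f\|^2_{L^2(\operatorname{supp}\partial_x\psi_0)}\ \ge\ (L_\Gamma f,f)_{\psi_0}\ \ge\ 4\lambda_0\|f\|^2_{H^1(\psi_0dx)}-\frac1{\lambda_0}\Big(\int\sqrt{\psi_0}\,f\sin\theta_*\,dx\Big)^2-\frac{C}{R^2}\|f\|^2_{L^2(\operatorname{supp}\partial_x\psi_0)}.$$
   Context: $\gamma\in(-1,1)$, $\Gamma:=\sqrt{1-\gamma^2}$, $\theta_*(x)=2\arctan(e^{-\Gamma x})$, and $L_\Gamma v:=-\partial_{xx}v+\Gamma^2(\cos^2\theta_*-\sin^2\theta_* )v$. $\lambda_0>0$ is a constant such that for all real $v\in H^1(\mathbb R)$, $(L_\Gamma v,v)_{L^2}\le2\|v\|^2_{H^1}$ and $(L_\Gamma v,v)_{L^2}\ge4\lambda_0\|v\|^2_{H^1}-\lambda_0^{-1}\big(\int v\sin\theta_*dx\big)^2$ (such a constant exists). Fix $\psi:\mathbb R\to[0,1]$ with $\psi\equiv0$ on $(-\infty,-1]$, $\psi\equiv1$ on $[1,\infty)$, $1-\psi(x)=\psi(-x)$, and $\sqrt\psi\in W^{3,\infty}$; $\psi_R(x):=\psi(x/R)$. $(f,g)_\varphi:=\int fg\varphi\,dx$, $\|f\|^2_{H^1(\varphi dx)}:=\int(|f|^2+|\partial_xf|^2)\varphi\,dx$,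 and $\|f\|_{L^2(I)}$ the $L^2$ norm over $I$. *)

theory Defs
  imports "HOL-Analysis.Analysis"
begin

definition Gam :: "real \<Rightarrow> real" where
  "Gam \<gamma> = sqrt (1 - \<gamma>\<^sup>2)"

definition theta_star :: "real \<Rightarrow> real \<Rightarrow> real" where
  "theta_star \<gamma> x = 2 * arctan (exp (- Gam \<gamma> * x))"

definition potV :: "real \<Rightarrow> real \<Rightarrow> real" where
  "potV \<gamma> x = (Gam \<gamma>)\<^sup>2 * ((cos (theta_star \<gamma> x))\<^sup>2 - (sin (theta_star \<gamma> x))\<^sup>2)"

definition sq_int :: "(real \<Rightarrow> real) \<Rightarrow> bool" where
  "sq_int f \<longleftrightarrow> f \<in> borel_measurable lborel \<and> integrable lborel (\<lambda>x. (f x)\<^sup>2)"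

text \<open>v \<in> H^1(R) with (weak) derivative v1: v is locally absolutely continuous with
  derivative v1 (fundamental theorem of calculus on every compact interval), v, v1 \<in> L^2.\<close>
definition H1 :: "(real \<Rightarrow> real) \<Rightarrow> (real \<Rightarrow> real) \<Rightarrow> bool" where
  "H1 v v1 \<longleftrightarrow> (\<forall>a b. a \<le> b \<longrightarrow> (v1 has_integral (v b - v a)) {a..b})
                 \<and> sq_int v \<and> sq_int v1"

definition H2 :: "(real \<Rightarrow> real) \<Rightarrow> (real \<Rightarrow> real) \<Rightarrow> (real \<Rightarrow> real) \<Rightarrow> bool" where
  "H2 f f1 f2 \<longleftrightarrow> (\<forall>x. (f has_real_derivative f1 x) (at x))
                   \<and> (\<forall>a b. a \<le> b \<longrightarrow> (f2 has_integral (f1 b - f1 a)) {a..b})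
                   \<and> sq_int f \<and> sq_int f1 \<and> sq_int f2"

definition LGam_form :: "real \<Rightarrow> (real \<Rightarrow> real) \<Rightarrow> (real \<Rightarrow> real) \<Rightarrow> real" where
  "LGam_form \<gamma> v v1 = (\<integral>x. (v1 x)\<^sup>2 + potV \<gamma> x * (v x)\<^sup>2 \<partial>lborel)"

definition H1_sqnorm :: "(real \<Rightarrow> real) \<Rightarrow> (real \<Rightarrow> real) \<Rightarrow> real" where
  "H1_sqnorm v v1 = (\<integral>x. (v x)\<^sup>2 + (v1 x)\<^sup>2 \<partial>lborel)"

definition H1w_sqnorm :: "(real \<Rightarrow> real) \<Rightarrow> (real \<Rightarrow> real) \<Rightarrow> (real \<Rightarrow> real) \<Rightarrow> real" where
  "H1w_sqnorm \<phi> f f1 = (\<integral>x. ((f x)\<^sup>2 + (f1 x)\<^sup>2) * \<phi> x \<partial>lborel)"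

definition LGam_wpair :: "real \<Rightarrow> (real \<Rightarrow> real) \<Rightarrow> (real \<Rightarrow> real) \<Rightarrow> (real \<Rightarrow> real) \<Rightarrow> real" where
  "LGam_wpair \<gamma> \<phi> f f2 = (\<integral>x. (- f2 x + potV \<gamma> x * f x) * f x * \<phi> x \<partial>lborel)"

definition L2_sqnorm_on :: "real set \<Rightarrow> (real \<Rightarrow> real) \<Rightarrow> real" where
  "L2_sqnorm_on I f = (LINT x:I|lborel. (f x)\<^sup>2)"

definition supp_fun :: "(real \<Rightarrow> real) \<Rightarrow> real set" where
  "supp_fun g = closure {x. g x \<noteq> 0}"

text \<open>g \<in> W^{3,\<infinity>}(R): g is C^1 with C^1 derivative whose derivative is bounded Lipschitz,
  i.e. g, g', g'' bounded and g'' Lipschitz (= g''' \<in> L^\<infinity>).\<close>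
definition W3inf :: "(real \<Rightarrow> real) \<Rightarrow> bool" where
  "W3inf g \<longleftrightarrow> (\<exists>g1 g2 L. (\<forall>x. (g has_real_derivative g1 x) (at x))
                     \<and> (\<forall>x. (g1 has_real_derivative g2 x) (at x))
                     \<and> L-lipschitz_on UNIV g2
                     \<and> bounded (range g) \<and> bounded (range g1) \<and> bounded (range g2))"

definition cutoff_psi :: "(real \<Rightarrow> real) \<Rightarrow> bool" where
  "cutoff_psi \<psi> \<longleftrightarrow> (\<forall>x. 0 \<le> \<psi> x \<and> \<psi> x \<le> 1)
     \<and> (\<forall>x. x \<le> -1 \<longrightarrow> \<psi> x = 0) \<and> (\<forall>x. 1 \<le> x \<longrightarrow> \<psi> x = 1)
     \<and> (\<forall>x. 1 - \<psi> x = \<psi> (- x))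
     \<and> W3inf (\<lambda>x. sqrt (\<psi> x))"

end

theory Submission
  imports Defs
begin

text \<open>Write \<open>\<psi>\<^sub>0 = \<sigma>\<^sup>2\<close> with \<open>\<sigma> = sqrt \<psi>\<^sub>0\<close> and localize \<open>f\<close> to \<open>v = \<sigma> f \<in> H\<^sup>1\<close>.
  Integrating by parts against the weight gives
    \<open>(L\<^sub>\<Gamma> f, f)\<^sub>\<psi>\<^sub>0 = (L\<^sub>\<Gamma> v, v) - \<integral> \<sigma>'\<^sup>2 f\<^sup>2\<close>,
    \<open>\<parallel>v\<parallel>\<^sup>2 = \<parallel>f\<parallel>\<^sup>2 + \<integral> \<sigma>'\<^sup>2 f\<^sup>2 - 1/2 \<integral> \<psi>\<^sub>0'' f\<^sup>2\<close>
  (norms in \<open>H\<^sup>1\<close> and \<open>H\<^sup>1(\<psi>\<^sub>0 dx)\<close>), so both assumed bounds on \<open>L\<^sub>\<Gamma>\<close> carry over to the weighted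
  form up to these two error integrals. Since \<open>sqrt \<psi>\<close> has bounded derivatives, \<open>\<sigma>' = O(1/R)\<close>
  and \<open>\<psi>\<^sub>0'' = O(1/R\<^sup>2)\<close>, and both vanish outside \<open>supp \<psi>\<^sub>0'\<close>.\<close>

section \<open>Integration on the real line\<close>

lemma integrable_bounded_mult:
  fixes h k :: "'a \<Rightarrow> real"
  assumes h: "integrable M h" and k: "k \<in> borel_measurable M" and bound: "\<And>x. \<bar>k x\<bar> \<le> B"
  shows "integrable M (\<lambda>x. k x * h x)"
proof (rule Bochner_Integration.integrable_bound)
  show "integrable M (\<lambda>x. B * \<bar>h x\<bar>)" using h by simp
  show "(\<lambda>x. k x * h x) \<in> borel_measurable M"
    using h k by (intro borel_measurable_times) auto
  show "AE x in M. norm (k x * h x) \<le> norm (B * \<bar>h x\<bar>)"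
  proof (rule AE_I2)
    fix x
    have "\<bar>k x\<bar> * \<bar>h x\<bar> \<le> B * \<bar>h x\<bar>" by (rule mult_right_mono[OF bound]) simp
    moreover have "0 \<le> B" using bound[of x] by linarith
    ultimately show "norm (k x * h x) \<le> norm (B * \<bar>h x\<bar>)" by (simp add: abs_mult)
  qed
qed

lemma sq_int_mult_integrable:
  assumes "sq_int f" "sq_int h"
  shows "integrable lborel (\<lambda>x. f x * h x)"
proof (rule Bochner_Integration.integrable_bound)
  show "integrable lborel (\<lambda>x. (f x)\<^sup>2 + (h x)\<^sup>2)"
    using assms unfolding sq_int_def by auto
  show "(\<lambda>x. f x * h x) \<in> borel_measurable lborel"
    using assms unfolding sq_int_def by (intro borel_measurable_times) auto
  have "\<bar>f x * h x\<bar> \<le> (f x)\<^sup>2 + (h x)\<^sup>2" for x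
  proof -
    have "2 * \<bar>f x * h x\<bar> \<le> (f x)\<^sup>2 + (h x)\<^sup>2"
      using sum_squares_bound[of "\<bar>f x\<bar>" "\<bar>h x\<bar>"] by (simp add: abs_mult)
    then show ?thesis using abs_ge_zero[of "f x * h x"] by linarith
  qed
  then show "AE x in lborel. norm (f x * h x) \<le> norm ((f x)\<^sup>2 + (h x)\<^sup>2)" by simp
qed

lemma sq_int_set_integrable_Icc:
  assumes "sq_int f"
  shows "set_integrable lborel {a..b} f"
proof -
  have "integrable lborel (\<lambda>x. f x * indicator {a..b} x)"
  proof (rule sq_int_mult_integrable[OF assms])
    have "(\<lambda>x. (indicator {a..b} x :: real)\<^sup>2) = indicator {a..b}"
      by (auto simp: indicator_def)
    then show "sq_int (indicator {a..b} :: real \<Rightarrow> real)"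
      by (simp add: sq_int_def integrable_indicator_iff emeasure_lborel_Icc_eq)
  qed
  then show ?thesis unfolding set_integrable_def by (simp add: mult.commute)
qed

lemma integrable_tendsto_at_top_imp_zero:
  fixes u :: "real \<Rightarrow> real"
  assumes u: "integrable lborel u" and lim: "(u \<longlongrightarrow> L) at_top"
  shows "L = 0"
proof (rule ccontr)
  assume "L \<noteq> 0"
  then have "\<bar>L\<bar> / 2 > 0" by simp
  with lim have "eventually (\<lambda>x. dist (u x) L < \<bar>L\<bar> / 2) at_top"
    by (rule tendstoD)
  then obtain N where N: "\<And>x. x \<ge> N \<Longrightarrow> \<bar>u x - L\<bar> < \<bar>L\<bar> / 2"
    by (auto simp: eventually_at_top_linorder dist_real_def)
  have "integrable lborel (\<lambda>x. (\<bar>L\<bar> / 2) * indicator {N..} x)"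
  proof (rule Bochner_Integration.integrable_bound[OF u])
    have "\<bar>L\<bar> / 2 * indicator {N..} x \<le> \<bar>u x\<bar>" for x
      using N[of x] abs_triangle_ineq2[of L "u x"] abs_minus_commute[of L "u x"]
      by (auto simp: indicator_def)
    then show "AE x in lborel. norm (\<bar>L\<bar> / 2 * indicator {N..} x) \<le> norm (u x)"
      by simp
  qed simp
  then have "integrable lborel (\<lambda>x. (2 / \<bar>L\<bar>) * ((\<bar>L\<bar> / 2) * indicator {N..} x))"
    by (rule integrable_mult_right)
  then have "integrable lborel (\<lambda>x. indicator {N..} x :: real)"
    using \<open>L \<noteq> 0\<close> by simp
  then have fin: "emeasure lborel {N..} < \<infinity>"
    by (simp add: integrable_indicator_iff)
  define m where "m = enn2real (emeasure lborel {N..})"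
  have "ennreal (m + 1) = emeasure lborel {N..N + (m + 1)}"
    by (simp add: m_def)
  also have "\<dots> \<le> emeasure lborel {N..}"
    by (rule emeasure_mono) auto
  also have "\<dots> = ennreal m"
    using fin by (simp add: m_def ennreal_enn2real less_top)
  finally show False
    by (simp add: m_def ennreal_le_iff)
qed

lemma integral_eq_zero_if_primitive_vanishes_left:
  fixes u w :: "real \<Rightarrow> real"
  assumes primitive: "\<And>x. c \<le> x \<Longrightarrow> (w has_integral (u x - u c)) {c..x}"
    and u0: "\<And>x. x \<le> c \<Longrightarrow> u x = 0"
    and w0: "\<And>x. x < c \<Longrightarrow> w x = 0"
    and u: "integrable lborel u" and w: "integrable lborel w"
  shows "integral\<^sup>L lborel w = 0"
proof -
  have set_int: "set_integrable lborel A w" if "A \<in> sets lborel" for A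
    unfolding set_integrable_def using integrable_mult_indicator[OF that w] .
  have partial: "(LINT t:{c..x}|lborel. w t) = u x" if "c \<le> x" for x
  proof -
    have "(LINT t:{c..x}|lborel. w t) = integral {c..x} w"
      by (rule set_borel_integral_eq_integral(2)[OF set_int]) simp
    also have "\<dots> = u x" using integral_unique[OF primitive[OF that]] u0[of c] by simp
    finally show ?thesis .
  qed
  have "(LINT t:{c..}|lborel. w t) = integral\<^sup>L lborel w"
    unfolding set_lebesgue_integral_def
    by (rule Bochner_Integration.integral_cong) (auto simp: indicator_def w0 not_le)
  moreover have "((\<lambda>b. LINT t:{c..b}|lborel. w t) \<longlongrightarrow> (LINT t:{c..}|lborel. w t)) at_top"
    by (rule tendsto_set_lebesgue_integral_at_top) (auto intro: set_int)
  ultimately have "(u \<longlongrightarrow> integral\<^sup>L lborel w) at_top"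
    by (auto elim!: Lim_transform_eventually simp: eventually_at_top_linorder partial intro!: exI[of _ c])
  then show ?thesis by (rule integrable_tendsto_at_top_imp_zero[OF u])
qed

lemma continuous_on_if_primitive:
  fixes f1 f2 :: "real \<Rightarrow> real"
  assumes "\<And>s t. s \<le> t \<Longrightarrow> (f2 has_integral (f1 t - f1 s)) {s..t}"
  shows "continuous_on UNIV f1"
proof -
  have "isCont f1 x" for x
  proof -
    have "continuous_on {x-1..x+1} (\<lambda>t. f1 (x-1) + integral {x-1..t} f2)"
      using assms[of "x-1" "x+1"]
      by (intro continuous_intros indefinite_integral_continuous_1) auto
    moreover have "f1 (x-1) + integral {x-1..t} f2 = f1 t" if "t \<in> {x-1..x+1}" for t
      using integral_unique[OF assms[of "x-1" t]] that by simp
    ultimately have "continuous_on {x-1..x+1} f1"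
      by (rule continuous_on_eq)
    then show ?thesis
      by (rule continuous_on_interior) (simp add: interior_atLeastAtMost_real)
  qed
  then show ?thesis by (simp add: continuous_at_imp_continuous_on)
qed

lemma integral_swap_triangle:
  fixes F H :: "real \<Rightarrow> real"
  assumes F: "integrable lborel F" and H: "integrable lborel H"
  shows "(\<integral>x. F x * (\<integral>t. of_bool (t \<le> x) * H t \<partial>lborel) \<partial>lborel)
       = (\<integral>t. H t * (\<integral>x. of_bool (t \<le> x) * F x \<partial>lborel) \<partial>lborel)"
proof -
  have [measurable]: "F \<in> borel_measurable lborel" "H \<in> borel_measurable lborel"
    using F H by auto
  define G where "G x t = F x * (of_bool (t \<le> x) * H t)" for x t
  have "integrable (lborel \<Otimes>\<^sub>M lborel) (\<lambda>(x, t). F x * H t)"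
  proof (rule lborel_pair.Fubini_integrable)
    have "integrable lborel (\<lambda>x. \<bar>F x\<bar> * (\<integral>y. \<bar>H y\<bar> \<partial>lborel))"
      using F by (intro integrable_mult_left) simp
    then show "integrable lborel (\<lambda>x. \<integral>y. norm ((\<lambda>(x, t). F x * H t) (x, y)) \<partial>lborel)"
      by (simp add: abs_mult)
  qed (use H in auto)
  then have "integrable (lborel \<Otimes>\<^sub>M lborel) (\<lambda>(x, t). G x t)"
    by (rule Bochner_Integration.integrable_bound) (auto simp: G_def abs_mult intro!: AE_I2)
  then have "(\<integral>t. (\<integral>x. G x t \<partial>lborel) \<partial>lborel) = (\<integral>x. (\<integral>t. G x t \<partial>lborel) \<partial>lborel)"
    by (rule lborel_pair.Fubini_integral)
  moreover have "(\<integral>t. G x t \<partial>lborel) = F x * (\<integral>t. of_bool (t \<le> x) * H t \<partial>lborel)" for x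
    by (simp add: G_def)
  moreover have "(\<integral>x. G x t \<partial>lborel) = H t * (\<integral>x. of_bool (t \<le> x) * F x \<partial>lborel)" for t
  proof -
    have "(\<integral>x. G x t \<partial>lborel) = (\<integral>x. H t * (of_bool (t \<le> x) * F x) \<partial>lborel)"
      by (simp add: G_def ac_simps)
    then show ?thesis by simp
  qed
  ultimately show ?thesis by simp
qed

lemma continuous_on_if_DERIV:
  assumes "\<And>x. (h has_real_derivative h' x) (at x)"
  shows "continuous_on UNIV h"
  using assms by (meson DERIV_continuous continuous_at_imp_continuous_on)

lemma integral_increments_swap:
  fixes \<phi> \<phi>' f1 f2 :: "real \<Rightarrow> real"
  assumes f2: "integrable lborel (\<lambda>x. indicator {a..b} x * f2 x)"
    and \<phi>': "integrable lborel (\<lambda>x. indicator {a..b} x * \<phi>' x)"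
    and \<phi>_increment: "\<And>x. x \<in> {a..b} \<Longrightarrow> \<phi> x - \<phi> a = (\<integral>t. indicator {a..x} t * \<phi>' t \<partial>lborel)"
    and f1_increment: "\<And>t. t \<in> {a..b} \<Longrightarrow> f1 b - f1 t = (\<integral>x. indicator {t..b} x * f2 x \<partial>lborel)"
  shows "(\<integral>x. indicator {a..b} x * f2 x * (\<phi> x - \<phi> a) \<partial>lborel)
       = (\<integral>t. indicator {a..b} t * \<phi>' t * (f1 b - f1 t) \<partial>lborel)"
proof -
  have inner_\<phi>': "indicator {a..b} x * f2 x * (\<integral>t. of_bool (t \<le> x) * (indicator {a..b} t * \<phi>' t) \<partial>lborel)
      = indicator {a..b} x * f2 x * (\<phi> x - \<phi> a)" for x
  proof (cases "x \<in> {a..b}")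
    case True
    then have "(\<lambda>t. of_bool (t \<le> x) * (indicator {a..b} t * \<phi>' t)) = (\<lambda>t. indicator {a..x} t * \<phi>' t)"
      by (auto simp: indicator_def)
    then show ?thesis using True \<phi>_increment[of x] by simp
  qed simp
  have inner_f2: "indicator {a..b} t * \<phi>' t * (\<integral>x. of_bool (t \<le> x) * (indicator {a..b} x * f2 x) \<partial>lborel)
      = indicator {a..b} t * \<phi>' t * (f1 b - f1 t)" for t
  proof (cases "t \<in> {a..b}")
    case True
    then have "(\<lambda>x. of_bool (t \<le> x) * (indicator {a..b} x * f2 x)) = (\<lambda>x. indicator {t..b} x * f2 x)"
      by (auto simp: indicator_def)
    then show ?thesis using True f1_increment[of t] by simp
  qed simp
  show ?thesis
    using integral_swap_triangle[OF f2 \<phi>'] by (simp only: inner_\<phi>' inner_f2)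
qed

lemma set_integrable_continuous_mult_Icc:
  fixes \<phi> f :: "real \<Rightarrow> real"
  assumes \<phi>: "continuous_on UNIV \<phi>" and f: "set_integrable lborel {a..b} f"
  shows "set_integrable lborel {a..b} (\<lambda>x. \<phi> x * f x)"
proof -
  obtain B where B: "\<And>x. x \<in> {a..b} \<Longrightarrow> \<bar>\<phi> x\<bar> \<le> B" and "0 \<le> B"
    using compact_imp_bounded[OF compact_continuous_image[OF continuous_on_subset[OF \<phi>] compact_Icc]]
    unfolding bounded_iff by (metis image_eqI real_norm_def subset_UNIV abs_ge_zero order_trans)
  have "integrable lborel (\<lambda>x. indicator {a..b} x * f x)"
    using f unfolding set_integrable_def by simp
  moreover have "(\<lambda>x. indicator {a..b} x * \<phi> x) \<in> borel_measurable lborel"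
    using borel_measurable_continuous_onI[OF \<phi>] by measurable
  moreover have "\<bar>indicator {a..b} x * \<phi> x\<bar> \<le> B" for x
    using B[of x] \<open>0 \<le> B\<close> by (auto simp: indicator_def)
  ultimately have "integrable lborel (\<lambda>x. (indicator {a..b} x * \<phi> x) * (indicator {a..b} x * f x))"
    by (rule integrable_bounded_mult)
  then show ?thesis
    unfolding set_integrable_def by (rule back_subst[of "integrable lborel"]) (auto simp: indicator_def)
qed

text \<open>Here \<open>f1\<close> is only an indefinite integral of \<open>f2\<close>, not differentiable everywhere, so the
  library's integration by parts does not apply; instead both increments are written as integrals
  and the order of integration is swapped.\<close>

lemma has_integral_by_parts_primitive:
  fixes \<phi> \<phi>' f1 f2 :: "real \<Rightarrow> real"
  assumes ab: "a \<le> b"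
    and \<phi>: "\<And>x. (\<phi> has_real_derivative \<phi>' x) (at x)" and \<phi>'_cont: "continuous_on UNIV \<phi>'"
    and primitive: "\<And>s t. s \<le> t \<Longrightarrow> (f2 has_integral (f1 t - f1 s)) {s..t}"
    and f2: "set_integrable lborel {a..b} f2"
  shows "((\<lambda>x. \<phi> x * f2 x + \<phi>' x * f1 x) has_integral (\<phi> b * f1 b - \<phi> a * f1 a)) {a..b}"
proof -
  define I where "I = (indicator {a..b} :: real \<Rightarrow> real)"
  have f1_cont: "continuous_on UNIV f1"
    using primitive by (rule continuous_on_if_primitive)
  have Icc_integrable: "integrable lborel (\<lambda>x. I x * g x)" if "continuous_on UNIV g" for g
    using borel_integrable_atLeastAtMost'[OF continuous_on_subset[OF that]]
    unfolding set_integrable_def I_def by simp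
  have int_f2: "integrable lborel (\<lambda>x. I x * f2 x)"
    using f2 unfolding set_integrable_def I_def by simp
  have int_\<phi>': "integrable lborel (\<lambda>x. I x * \<phi>' x)"
    by (rule Icc_integrable[OF \<phi>'_cont])
  have int_\<phi>'f1: "integrable lborel (\<lambda>x. I x * (\<phi>' x * f1 x))"
    by (rule Icc_integrable) (intro continuous_intros \<phi>'_cont f1_cont)
  have int_f2\<phi>: "integrable lborel (\<lambda>x. \<phi> x * (I x * f2 x))"
    using set_integrable_continuous_mult_Icc[OF continuous_on_if_DERIV[OF \<phi>] f2]
    unfolding set_integrable_def I_def by (simp add: ac_simps)
  have \<phi>_increment: "\<phi> x - \<phi> a = (\<integral>t. indicator {a..x} t * \<phi>' t \<partial>lborel)" if "a \<le> x" for x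
  proof -
    have "(\<integral>t. indicator {a..x} t *\<^sub>R \<phi>' t \<partial>lborel) = \<phi> x - \<phi> a"
      using that
      by (intro integral_FTC_atLeastAtMost continuous_on_subset[OF \<phi>'_cont])
        (auto simp: has_real_derivative_iff_has_vector_derivative[symmetric] intro: DERIV_subset[OF \<phi>])
    then show ?thesis by simp
  qed
  have f1_increment: "f1 b - f1 t = (\<integral>x. indicator {t..b} x * f2 x \<partial>lborel)" if "t \<le> b" "a \<le> t" for t
  proof -
    have "set_integrable lborel {t..b} f2"
      by (rule set_integrable_subset[OF f2]) (use that in auto)
    then have "(LINT x:{t..b}|lborel. f2 x) = integral {t..b} f2"
      by (rule set_borel_integral_eq_integral(2))
    then show ?thesis
      using integral_unique[OF primitive[OF that(1)]] by (simp add: set_lebesgue_integral_def)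
  qed
  have "(\<integral>x. \<phi> x * (I x * f2 x) \<partial>lborel) - \<phi> a * (\<integral>x. I x * f2 x \<partial>lborel)
      = (\<integral>x. \<phi> x * (I x * f2 x) - \<phi> a * (I x * f2 x) \<partial>lborel)"
    by (subst Bochner_Integration.integral_diff) (simp_all add: int_f2\<phi> int_f2)
  also have "\<dots> = (\<integral>x. I x * f2 x * (\<phi> x - \<phi> a) \<partial>lborel)"
    by (rule Bochner_Integration.integral_cong) (simp_all add: algebra_simps)
  also have "\<dots> = (\<integral>t. I t * \<phi>' t * (f1 b - f1 t) \<partial>lborel)"
    unfolding I_def
    by (rule integral_increments_swap) (use int_f2 int_\<phi>' \<phi>_increment f1_increment in \<open>auto simp: I_def\<close>)
  also have "\<dots> = (\<integral>t. f1 b * (I t * \<phi>' t) - I t * (\<phi>' t * f1 t) \<partial>lborel)"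
    by (rule Bochner_Integration.integral_cong) (simp_all add: algebra_simps)
  also have "\<dots> = f1 b * (\<integral>t. I t * \<phi>' t \<partial>lborel) - (\<integral>t. I t * (\<phi>' t * f1 t) \<partial>lborel)"
    by (subst Bochner_Integration.integral_diff) (simp_all add: int_\<phi>' int_\<phi>'f1)
  finally have "(\<integral>x. \<phi> x * (I x * f2 x) \<partial>lborel) + (\<integral>t. I t * (\<phi>' t * f1 t) \<partial>lborel)
      = \<phi> b * f1 b - \<phi> a * f1 a"
    using f1_increment[of a] \<phi>_increment[of b] ab by (simp add: I_def algebra_simps)
  then have "(\<integral>x. \<phi> x * (I x * f2 x) + I x * (\<phi>' x * f1 x) \<partial>lborel) = \<phi> b * f1 b - \<phi> a * f1 a"
    by (simp add: int_f2\<phi> int_\<phi>'f1)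
  moreover have set_int: "set_integrable lborel {a..b} (\<lambda>x. \<phi> x * f2 x + \<phi>' x * f1 x)"
    using Bochner_Integration.integrable_add[OF int_f2\<phi> int_\<phi>'f1]
    unfolding set_integrable_def I_def by (simp add: algebra_simps)
  ultimately have "integral {a..b} (\<lambda>x. \<phi> x * f2 x + \<phi>' x * f1 x) = \<phi> b * f1 b - \<phi> a * f1 a"
    using set_borel_integral_eq_integral(2)[OF set_int]
    unfolding set_lebesgue_integral_def I_def by (simp add: algebra_simps)
  then show ?thesis
    using set_borel_integral_eq_integral(1)[OF set_int] by (metis has_integral_integral)
qed

lemma DERIV_zero_if_constant_on_open:
  fixes h :: "real \<Rightarrow> real"
  assumes "open U" "x \<in> U" "\<And>y. y \<in> U \<Longrightarrow> h y = c" "(h has_real_derivative d) (at x)"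
  shows "d = 0"
proof -
  have "((\<lambda>_. c) has_real_derivative d) (at x)"
    by (rule has_field_derivative_transform_within_open[OF assms(4) assms(1) assms(2)])
      (use assms(3) in auto)
  then show ?thesis using DERIV_const DERIV_unique by blast
qed

lemma integrable_bounded_continuous_mult:
  fixes k g :: "real \<Rightarrow> real"
  assumes "continuous_on UNIV k" "\<And>x. \<bar>k x\<bar> \<le> B" "integrable lborel g"
  shows "integrable lborel (\<lambda>x. k x * g x)"
  using assms by (intro integrable_bounded_mult) (auto simp: borel_measurable_continuous_onI)

lemma abs_integral_le_L2_sqnorm_on:
  fixes k f :: "real \<Rightarrow> real"
  assumes S: "S \<in> sets lborel" and f: "integrable lborel (\<lambda>x. (f x)\<^sup>2)"
    and kf: "integrable lborel (\<lambda>x. k x * (f x)\<^sup>2)"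
    and bound: "\<And>x. \<bar>k x\<bar> \<le> K" and supp: "\<And>x. k x \<noteq> 0 \<Longrightarrow> x \<in> S"
  shows "\<bar>\<integral>x. k x * (f x)\<^sup>2 \<partial>lborel\<bar> \<le> K * L2_sqnorm_on S f"
proof -
  have "\<bar>\<integral>x. k x * (f x)\<^sup>2 \<partial>lborel\<bar> \<le> (\<integral>x. \<bar>k x * (f x)\<^sup>2\<bar> \<partial>lborel)"
    using integral_norm_bound[of lborel "\<lambda>x. k x * (f x)\<^sup>2"] by simp
  also have "\<dots> \<le> (\<integral>x. K * (indicator S x * (f x)\<^sup>2) \<partial>lborel)"
  proof (rule Bochner_Integration.integral_mono)
    show "integrable lborel (\<lambda>x. K * (indicator S x * (f x)\<^sup>2))"
      using integrable_mult_indicator[OF S f] by simp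
    show "\<bar>k x * (f x)\<^sup>2\<bar> \<le> K * (indicator S x * (f x)\<^sup>2)" for x
      using supp[of x] mult_right_mono[OF bound[of x], of "(f x)\<^sup>2"] order_trans[OF abs_ge_zero bound[of x]]
      by (cases "k x = 0") (auto simp: abs_mult)
  qed (use kf in simp)
  also have "\<dots> = K * L2_sqnorm_on S f"
    by (simp add: L2_sqnorm_on_def set_lebesgue_integral_def)
  finally show ?thesis .
qed

lemma L2_sqnorm_on_nonneg: "0 \<le> L2_sqnorm_on S f"
  unfolding L2_sqnorm_on_def set_lebesgue_integral_def
  by (rule Bochner_Integration.integral_nonneg) simp

lemma abs_potV_le_1:
  assumes "-1 < \<gamma>" "\<gamma> < 1"
  shows "\<bar>potV \<gamma> x\<bar> \<le> 1"
proof -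
  have "\<gamma>\<^sup>2 < 1" using assms by (simp add: abs_square_less_1 abs_less_iff)
  then have "0 \<le> (Gam \<gamma>)\<^sup>2" "(Gam \<gamma>)\<^sup>2 \<le> 1"
    unfolding Gam_def by simp_all
  moreover have "\<bar>(cos (theta_star \<gamma> x))\<^sup>2 - (sin (theta_star \<gamma> x))\<^sup>2\<bar> \<le> 1"
    using sin_cos_squared_add[of "theta_star \<gamma> x"] zero_le_power2[of "sin (theta_star \<gamma> x)"]
      zero_le_power2[of "cos (theta_star \<gamma> x)"] by linarith
  ultimately show ?thesis
    unfolding potV_def by (simp add: abs_mult mult_le_one)
qed

lemma continuous_on_potV: "continuous_on UNIV (potV \<gamma>)"
  unfolding potV_def theta_star_def by (intro continuous_intros)

section \<open>Localization by a weight\<close>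

locale localizing_weight =
  fixes \<sigma> s1 s2 :: "real \<Rightarrow> real" and B1 B2 c :: real
  assumes \<sigma>_deriv: "\<And>x. (\<sigma> has_real_derivative s1 x) (at x)"
    and s1_deriv: "\<And>x. (s1 has_real_derivative s2 x) (at x)"
    and s2_cont: "continuous_on UNIV s2"
    and \<sigma>_nonneg: "\<And>x. 0 \<le> \<sigma> x" and \<sigma>_le_1: "\<And>x. \<sigma> x \<le> 1"
    and s1_bound: "\<And>x. \<bar>s1 x\<bar> \<le> B1" and s2_bound: "\<And>x. \<bar>s2 x\<bar> \<le> B2"
    and \<sigma>_vanishes: "\<And>x. x \<le> c \<Longrightarrow> \<sigma> x = 0"
begin

definition weight :: "real \<Rightarrow> real" where
  "weight x = (\<sigma> x)\<^sup>2"

definition weight' :: "real \<Rightarrow> real" where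
  "weight' x = 2 * \<sigma> x * s1 x"

definition weight'' :: "real \<Rightarrow> real" where
  "weight'' x = 2 * ((s1 x)\<^sup>2 + \<sigma> x * s2 x)"

lemma weight_deriv: "(weight has_real_derivative weight' x) (at x)"
  unfolding weight_def[abs_def] weight'_def
  by (auto intro!: derivative_eq_intros \<sigma>_deriv)

lemma weight'_deriv: "(weight' has_real_derivative weight'' x) (at x)"
  unfolding weight'_def[abs_def]
  by (rule DERIV_cong[OF DERIV_mult[OF DERIV_cmult[OF \<sigma>_deriv] s1_deriv]])
    (simp add: weight''_def algebra_simps power2_eq_square)

lemma s1_vanishes: "x < c \<Longrightarrow> s1 x = 0"
  by (rule DERIV_zero_if_constant_on_open[of "{..<c}" x \<sigma> 0]) (auto intro: \<sigma>_vanishes \<sigma>_deriv)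

lemma s2_vanishes: "x < c \<Longrightarrow> s2 x = 0"
  by (rule DERIV_zero_if_constant_on_open[of "{..<c}" x s1 0]) (auto intro: s1_vanishes s1_deriv)

lemma weight_vanishes: "x \<le> c \<Longrightarrow> weight x = 0"
  by (simp add: weight_def \<sigma>_vanishes)

lemma weight'_vanishes: "x \<le> c \<Longrightarrow> weight' x = 0"
  by (simp add: weight'_def \<sigma>_vanishes)

lemma weight''_vanishes: "x < c \<Longrightarrow> weight'' x = 0"
  by (simp add: weight''_def s1_vanishes s2_vanishes)

lemma weight_bounds: "0 \<le> weight x" "weight x \<le> 1"
  using \<sigma>_nonneg[of x] \<sigma>_le_1[of x] by (simp_all add: weight_def power_le_one)

lemma abs_weight'_le: "\<bar>weight' x\<bar> \<le> 2 * B1"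
proof -
  have "\<bar>\<sigma> x\<bar> * \<bar>s1 x\<bar> \<le> 1 * B1"
    using \<sigma>_nonneg[of x] \<sigma>_le_1[of x] s1_bound[of x] by (intro mult_mono) auto
  then show ?thesis by (simp add: weight'_def abs_mult)
qed

lemma abs_weight''_le: "\<bar>weight'' x\<bar> \<le> 2 * (B1\<^sup>2 + B2)"
proof -
  have "(s1 x)\<^sup>2 \<le> B1\<^sup>2"
    using power_mono[OF s1_bound[of x], of 2] by simp
  moreover have "\<bar>\<sigma> x\<bar> * \<bar>s2 x\<bar> \<le> B2"
    using mult_mono[of "\<bar>\<sigma> x\<bar>" 1 "\<bar>s2 x\<bar>" B2] \<sigma>_nonneg[of x] \<sigma>_le_1[of x] s2_bound[of x] by simp
  moreover have "\<bar>(s1 x)\<^sup>2 + \<sigma> x * s2 x\<bar> \<le> (s1 x)\<^sup>2 + \<bar>\<sigma> x\<bar> * \<bar>s2 x\<bar>"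
    using abs_triangle_ineq[of "(s1 x)\<^sup>2" "\<sigma> x * s2 x"] by (simp add: abs_mult)
  ultimately show ?thesis
    unfolding weight''_def abs_mult by simp
qed

lemma \<sigma>_pos_if_s1_nonzero: "s1 x \<noteq> 0 \<Longrightarrow> 0 < \<sigma> x"
proof (rule ccontr)
  assume "s1 x \<noteq> 0" "\<not> 0 < \<sigma> x"
  then have "\<sigma> x = 0" using \<sigma>_nonneg[of x] by simp
  have "s1 x = 0"
    by (rule DERIV_local_min[OF \<sigma>_deriv zero_less_one]) (use \<open>\<sigma> x = 0\<close> \<sigma>_nonneg in auto)
  with \<open>s1 x \<noteq> 0\<close> show False by simp
qed

definition support :: "real set" where
  "support = supp_fun (deriv weight)"

lemma support_eq: "support = closure {x. weight' x \<noteq> 0}"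
proof -
  have "deriv weight = weight'"
    using DERIV_imp_deriv[OF weight_deriv] by auto
  then show ?thesis by (simp add: support_def supp_fun_def)
qed

lemma support_closed: "closed support"
  by (simp add: support_eq)

lemma s1_nonzero_in_support: "s1 x \<noteq> 0 \<Longrightarrow> x \<in> support"
proof -
  assume "s1 x \<noteq> 0"
  then have "weight' x \<noteq> 0"
    using \<sigma>_pos_if_s1_nonzero[of x] by (simp add: weight'_def)
  then show "x \<in> support"
    unfolding support_eq by (intro closure_subset[THEN subsetD]) simp
qed

lemma weight''_nonzero_in_support:
  assumes "weight'' x \<noteq> 0"
  shows "x \<in> support"
proof (rule ccontr)
  assume "x \<notin> support"
  moreover have "weight' y = 0" if "y \<in> - support" for y
    using that closure_subset[of "{x. weight' x \<noteq> 0}"] unfolding support_eq by auto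
  ultimately have "weight'' x = 0"
    using support_closed
    by (intro DERIV_zero_if_constant_on_open[of "- support" x weight' 0, OF _ _ _ weight'_deriv]) auto
  with assms show False by simp
qed

lemma \<sigma>_cont: "continuous_on UNIV \<sigma>"
  using \<sigma>_deriv by (rule continuous_on_if_DERIV)

lemma s1_cont: "continuous_on UNIV s1"
  using s1_deriv by (rule continuous_on_if_DERIV)

lemma weight_cont: "continuous_on UNIV weight"
  using weight_deriv by (rule continuous_on_if_DERIV)

lemma weight'_cont: "continuous_on UNIV weight'"
  using weight'_deriv by (rule continuous_on_if_DERIV)

lemma weight''_cont: "continuous_on UNIV weight''"
  unfolding weight''_def[abs_def] by (intro continuous_intros \<sigma>_cont s1_cont s2_cont)

context
  fixes f f1 f2 :: "real \<Rightarrow> real"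
  assumes f: "H2 f f1 f2"
begin

lemma f_deriv: "(f has_real_derivative f1 x) (at x)"
  using f by (simp add: H2_def)

lemma f2_primitive: "s \<le> t \<Longrightarrow> (f2 has_integral (f1 t - f1 s)) {s..t}"
  using f by (simp add: H2_def)

lemma sq_int_f: "sq_int f" and sq_int_f1: "sq_int f1" and sq_int_f2: "sq_int f2"
  using f by (simp_all add: H2_def)

lemma f_cont: "continuous_on UNIV f"
  using f_deriv by (rule continuous_on_if_DERIV)

lemma f1_cont: "continuous_on UNIV f1"
  using f2_primitive by (rule continuous_on_if_primitive)

lemma integrable_f_sq: "integrable lborel (\<lambda>x. (f x)\<^sup>2)"
  using sq_int_f by (simp add: sq_int_def)

lemma integrable_f1_sq: "integrable lborel (\<lambda>x. (f1 x)\<^sup>2)"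
  using sq_int_f1 by (simp add: sq_int_def)

lemma integrable_s1_sq_f_sq: "integrable lborel (\<lambda>x. (s1 x)\<^sup>2 * (f x)\<^sup>2)"
proof (rule integrable_bounded_continuous_mult[OF _ _ integrable_f_sq])
  show "continuous_on UNIV (\<lambda>x. (s1 x)\<^sup>2)" by (intro continuous_intros s1_cont)
  show "\<bar>(s1 x)\<^sup>2\<bar> \<le> B1\<^sup>2" for x
    using power_mono[OF s1_bound[of x], of 2] by simp
qed

lemma integrable_weight'_f_f1: "integrable lborel (\<lambda>x. weight' x * (f x * f1 x))"
  by (rule integrable_bounded_continuous_mult[OF weight'_cont abs_weight'_le])
    (rule sq_int_mult_integrable[OF sq_int_f sq_int_f1])

lemma integrable_weight_f_f1: "integrable lborel (\<lambda>x. weight x * (f x * f1 x))"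
  by (rule integrable_bounded_continuous_mult[OF weight_cont, of 1])
    (use weight_bounds in \<open>auto intro: sq_int_mult_integrable[OF sq_int_f sq_int_f1]\<close>)

lemma integrable_weight_f_f2: "integrable lborel (\<lambda>x. weight x * (f x * f2 x))"
  by (rule integrable_bounded_continuous_mult[OF weight_cont, of 1])
    (use weight_bounds in \<open>auto intro: sq_int_mult_integrable[OF sq_int_f sq_int_f2]\<close>)

lemma integrable_weight_f_sq: "integrable lborel (\<lambda>x. weight x * (f x)\<^sup>2)"
  by (rule integrable_bounded_continuous_mult[OF weight_cont, of 1])
    (use weight_bounds integrable_f_sq in auto)

lemma integrable_weight_f1_sq: "integrable lborel (\<lambda>x. weight x * (f1 x)\<^sup>2)"
  by (rule integrable_bounded_continuous_mult[OF weight_cont, of 1])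
    (use weight_bounds integrable_f1_sq in auto)

lemma integrable_weight''_f_sq: "integrable lborel (\<lambda>x. weight'' x * (f x)\<^sup>2)"
  by (rule integrable_bounded_continuous_mult[OF weight''_cont abs_weight''_le integrable_f_sq])

lemma integrable_potV_weight_f_sq:
  assumes "-1 < \<gamma>" "\<gamma> < 1"
  shows "integrable lborel (\<lambda>x. potV \<gamma> x * weight x * (f x)\<^sup>2)"
proof (rule integrable_bounded_continuous_mult[OF _ _ integrable_f_sq])
  show "continuous_on UNIV (\<lambda>x. potV \<gamma> x * weight x)"
    by (intro continuous_intros continuous_on_potV weight_cont)
  show "\<bar>potV \<gamma> x * weight x\<bar> \<le> 1" for x
    using abs_potV_le_1[OF assms, of x] weight_bounds[of x]
    by (simp add: abs_mult mult_le_one)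
qed

lemma localized_derivative_sq:
  "(s1 x * f x + \<sigma> x * f1 x)\<^sup>2 = (s1 x)\<^sup>2 * (f x)\<^sup>2 + weight' x * (f x * f1 x) + weight x * (f1 x)\<^sup>2"
  by (simp add: weight_def weight'_def power2_eq_square algebra_simps)

lemma localized_sq: "(\<sigma> x * f x)\<^sup>2 = weight x * (f x)\<^sup>2"
  by (simp add: weight_def power_mult_distrib)

lemma H1_localized: "H1 (\<lambda>x. \<sigma> x * f x) (\<lambda>x. s1 x * f x + \<sigma> x * f1 x)"
  unfolding H1_def
proof (intro conjI allI impI)
  fix s t :: real
  assume "s \<le> t"
  have "((\<lambda>x. \<sigma> x * f x) has_real_derivative s1 x * f x + \<sigma> x * f1 x) (at x)" for x
    by (rule DERIV_cong[OF DERIV_mult[OF \<sigma>_deriv f_deriv]]) simp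
  then show "((\<lambda>x. s1 x * f x + \<sigma> x * f1 x) has_integral \<sigma> t * f t - \<sigma> s * f s) {s..t}"
    by (intro fundamental_theorem_of_calculus[OF \<open>s \<le> t\<close>])
      (simp add: has_real_derivative_iff_has_vector_derivative has_vector_derivative_at_within)
next
  show "sq_int (\<lambda>x. \<sigma> x * f x)"
    unfolding sq_int_def localized_sq
    by (auto intro!: borel_measurable_continuous_onI continuous_intros \<sigma>_cont f_cont integrable_weight_f_sq)
  show "sq_int (\<lambda>x. s1 x * f x + \<sigma> x * f1 x)"
    unfolding sq_int_def localized_derivative_sq
    by (auto intro!: borel_measurable_continuous_onI continuous_intros \<sigma>_cont s1_cont f_cont f1_cont
        Bochner_Integration.integrable_add integrable_s1_sq_f_sq integrable_weight'_f_f1 integrable_weight_f1_sq)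
qed

lemma weight_by_parts:
  "(\<integral>x. weight x * (f x * f2 x) \<partial>lborel) + (\<integral>x. weight' x * (f x * f1 x) \<partial>lborel)
     + (\<integral>x. weight x * (f1 x)\<^sup>2 \<partial>lborel) = 0"
proof -
  have integrand: "(\<lambda>x. weight x * f x * f2 x + (weight' x * f x + weight x * f1 x) * f1 x)
      = (\<lambda>x. weight x * (f x * f2 x) + weight' x * (f x * f1 x) + weight x * (f1 x)\<^sup>2)"
    by (simp add: fun_eq_iff algebra_simps power2_eq_square)
  have integrable: "integrable lborel
      (\<lambda>x. weight x * (f x * f2 x) + weight' x * (f x * f1 x) + weight x * (f1 x)\<^sup>2)"
    by (intro Bochner_Integration.integrable_add integrable_weight_f_f2 integrable_weight'_f_f1
        integrable_weight_f1_sq)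
  have "(\<integral>x. weight x * f x * f2 x + (weight' x * f x + weight x * f1 x) * f1 x \<partial>lborel) = 0"
  proof (rule integral_eq_zero_if_primitive_vanishes_left[where c = c and u = "\<lambda>x. weight x * f x * f1 x"])
    fix x assume "c \<le> x"
    show "((\<lambda>x. weight x * f x * f2 x + (weight' x * f x + weight x * f1 x) * f1 x)
        has_integral (weight x * f x * f1 x - weight c * f c * f1 c)) {c..x}"
    proof (rule has_integral_by_parts_primitive[OF \<open>c \<le> x\<close> _ _ f2_primitive])
      show "((\<lambda>x. weight x * f x) has_real_derivative weight' t * f t + weight t * f1 t) (at t)" for t
        by (rule DERIV_cong[OF DERIV_mult[OF weight_deriv f_deriv]]) simp
      show "continuous_on UNIV (\<lambda>x. weight' x * f x + weight x * f1 x)"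
        by (intro continuous_intros weight'_cont weight_cont f_cont f1_cont)
      show "set_integrable lborel {c..x} f2"
        by (rule sq_int_set_integrable_Icc[OF sq_int_f2])
    qed
  next
    show "integrable lborel (\<lambda>x. weight x * f x * f1 x)"
      using integrable_weight_f_f1 by (simp add: mult.assoc)
  qed (use integrable in \<open>auto simp: integrand weight_vanishes weight'_vanishes less_imp_le\<close>)
  then show ?thesis
    using integrable_weight_f_f2 integrable_weight'_f_f1 integrable_weight_f1_sq
    by (simp add: integrand)
qed

lemma weight''_by_parts:
  "(\<integral>x. weight'' x * (f x)\<^sup>2 \<partial>lborel) + 2 * (\<integral>x. weight' x * (f x * f1 x) \<partial>lborel) = 0"
proof -
  have "(\<integral>x. weight'' x * (f x)\<^sup>2 + 2 * (weight' x * (f x * f1 x)) \<partial>lborel) = 0"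
  proof (rule integral_eq_zero_if_primitive_vanishes_left[where c = c and u = "\<lambda>x. weight' x * (f x)\<^sup>2"])
    fix x assume "c \<le> x"
    have "((\<lambda>x. weight' x * (f x)\<^sup>2) has_real_derivative
        weight'' t * (f t)\<^sup>2 + 2 * (weight' t * (f t * f1 t))) (at t)" for t
      by (auto intro!: derivative_eq_intros weight'_deriv f_deriv simp: algebra_simps power2_eq_square)
    then show "((\<lambda>x. weight'' x * (f x)\<^sup>2 + 2 * (weight' x * (f x * f1 x)))
        has_integral (weight' x * (f x)\<^sup>2 - weight' c * (f c)\<^sup>2)) {c..x}"
      by (intro fundamental_theorem_of_calculus[OF \<open>c \<le> x\<close>])
        (simp add: has_real_derivative_iff_has_vector_derivative has_vector_derivative_at_within)
  next
    show "integrable lborel (\<lambda>x. weight' x * (f x)\<^sup>2)"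
      by (rule integrable_bounded_continuous_mult[OF weight'_cont abs_weight'_le integrable_f_sq])
  qed (auto simp: weight'_vanishes weight''_vanishes less_imp_le
        intro!: Bochner_Integration.integrable_add integrable_weight''_f_sq integrable_weight'_f_f1)
  then show ?thesis
    using integrable_weight''_f_sq integrable_weight'_f_f1 by simp
qed

lemma LGam_wpair_localized:
  assumes "-1 < \<gamma>" "\<gamma> < 1"
  shows "LGam_wpair \<gamma> weight f f2
    = LGam_form \<gamma> (\<lambda>x. \<sigma> x * f x) (\<lambda>x. s1 x * f x + \<sigma> x * f1 x)
      - (\<integral>x. (s1 x)\<^sup>2 * (f x)\<^sup>2 \<partial>lborel)"
proof -
  note integrable = integrable_s1_sq_f_sq integrable_weight'_f_f1 integrable_weight_f1_sq
    integrable_potV_weight_f_sq[OF assms] integrable_weight_f_f2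
  have "LGam_wpair \<gamma> weight f f2
      = (\<integral>x. potV \<gamma> x * weight x * (f x)\<^sup>2 - weight x * (f x * f2 x) \<partial>lborel)"
    unfolding LGam_wpair_def
    by (rule Bochner_Integration.integral_cong) (simp_all add: algebra_simps power2_eq_square)
  moreover have "LGam_form \<gamma> (\<lambda>x. \<sigma> x * f x) (\<lambda>x. s1 x * f x + \<sigma> x * f1 x)
      = (\<integral>x. (s1 x)\<^sup>2 * (f x)\<^sup>2 + weight' x * (f x * f1 x) + weight x * (f1 x)\<^sup>2
            + potV \<gamma> x * weight x * (f x)\<^sup>2 \<partial>lborel)"
    unfolding LGam_form_def localized_derivative_sq localized_sq by (simp add: mult.assoc)
  ultimately show ?thesis
    using weight_by_parts integrable by simp
qed

lemma H1_sqnorm_localized: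
  "H1_sqnorm (\<lambda>x. \<sigma> x * f x) (\<lambda>x. s1 x * f x + \<sigma> x * f1 x)
    = H1w_sqnorm weight f f1 + (\<integral>x. (s1 x)\<^sup>2 * (f x)\<^sup>2 \<partial>lborel)
      - (\<integral>x. weight'' x * (f x)\<^sup>2 \<partial>lborel) / 2"
proof -
  note integrable = integrable_weight_f_sq integrable_s1_sq_f_sq integrable_weight'_f_f1
    integrable_weight_f1_sq
  have "H1w_sqnorm weight f f1 = (\<integral>x. weight x * (f x)\<^sup>2 + weight x * (f1 x)\<^sup>2 \<partial>lborel)"
    unfolding H1w_sqnorm_def
    by (rule Bochner_Integration.integral_cong) (simp_all add: algebra_simps)
  moreover have "H1_sqnorm (\<lambda>x. \<sigma> x * f x) (\<lambda>x. s1 x * f x + \<sigma> x * f1 x)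
      = (\<integral>x. weight x * (f x)\<^sup>2 + (s1 x)\<^sup>2 * (f x)\<^sup>2 + weight' x * (f x * f1 x)
            + weight x * (f1 x)\<^sup>2 \<partial>lborel)"
    unfolding H1_sqnorm_def localized_derivative_sq localized_sq by (simp add: add.assoc)
  ultimately show ?thesis
    using weight''_by_parts integrable by simp
qed

lemma support_measurable: "support \<in> sets lborel"
  using support_closed by simp

lemma integral_s1_sq_f_sq_nonneg: "0 \<le> (\<integral>x. (s1 x)\<^sup>2 * (f x)\<^sup>2 \<partial>lborel)"
  by (rule Bochner_Integration.integral_nonneg) simp

lemma integral_s1_sq_f_sq_le: "(\<integral>x. (s1 x)\<^sup>2 * (f x)\<^sup>2 \<partial>lborel) \<le> B1\<^sup>2 * L2_sqnorm_on support f"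
proof -
  have "\<bar>\<integral>x. (s1 x)\<^sup>2 * (f x)\<^sup>2 \<partial>lborel\<bar> \<le> B1\<^sup>2 * L2_sqnorm_on support f"
  proof (rule abs_integral_le_L2_sqnorm_on[OF support_measurable integrable_f_sq integrable_s1_sq_f_sq])
    show "\<bar>(s1 x)\<^sup>2\<bar> \<le> B1\<^sup>2" for x
      using power_mono[OF s1_bound[of x], of 2] by simp
    show "(s1 x)\<^sup>2 \<noteq> 0 \<Longrightarrow> x \<in> support" for x
      by (simp add: s1_nonzero_in_support)
  qed
  then show ?thesis by simp
qed

lemma abs_integral_weight''_f_sq_le:
  "\<bar>\<integral>x. weight'' x * (f x)\<^sup>2 \<partial>lborel\<bar> \<le> 2 * (B1\<^sup>2 + B2) * L2_sqnorm_on support f"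
  by (rule abs_integral_le_L2_sqnorm_on[OF support_measurable integrable_f_sq integrable_weight''_f_sq
        abs_weight''_le weight''_nonzero_in_support])

lemma LGam_wpair_upper_bound:
  assumes "-1 < \<gamma>" "\<gamma> < 1"
    and upper: "LGam_form \<gamma> (\<lambda>x. \<sigma> x * f x) (\<lambda>x. s1 x * f x + \<sigma> x * f1 x)
      \<le> 2 * H1_sqnorm (\<lambda>x. \<sigma> x * f x) (\<lambda>x. s1 x * f x + \<sigma> x * f1 x)"
  shows "LGam_wpair \<gamma> weight f f2
    \<le> 2 * H1w_sqnorm weight f f1 + (3 * B1\<^sup>2 + 2 * B2) * L2_sqnorm_on support f"
  using upper LGam_wpair_localized[OF assms(1,2)] H1_sqnorm_localized integral_s1_sq_f_sq_le
    abs_integral_weight''_f_sq_le abs_ge_minus_self[of "\<integral>x. weight'' x * (f x)\<^sup>2 \<partial>lborel"]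
  by (simp add: algebra_simps)

lemma LGam_wpair_lower_bound:
  assumes "-1 < \<gamma>" "\<gamma> < 1" and "0 < lam0"
    and lower: "LGam_form \<gamma> (\<lambda>x. \<sigma> x * f x) (\<lambda>x. s1 x * f x + \<sigma> x * f1 x)
      \<ge> 4 * lam0 * H1_sqnorm (\<lambda>x. \<sigma> x * f x) (\<lambda>x. s1 x * f x + \<sigma> x * f1 x)
        - (1 / lam0) * (\<integral>x. \<sigma> x * f x * sin (theta_star \<gamma> x) \<partial>lborel)\<^sup>2"
  shows "LGam_wpair \<gamma> weight f f2
    \<ge> 4 * lam0 * H1w_sqnorm weight f f1
      - (1 / lam0) * (\<integral>x. \<sigma> x * f x * sin (theta_star \<gamma> x) \<partial>lborel)\<^sup>2
      - (B1\<^sup>2 + 4 * lam0 * (B1\<^sup>2 + B2)) * L2_sqnorm_on support f"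
proof -
  define T where "T = (\<integral>x. (s1 x)\<^sup>2 * (f x)\<^sup>2 \<partial>lborel)"
  define E where "E = (\<integral>x. weight'' x * (f x)\<^sup>2 \<partial>lborel)"
  have "0 \<le> lam0 * T"
    using \<open>0 < lam0\<close> integral_s1_sq_f_sq_nonneg by (simp add: T_def)
  moreover have "lam0 * E \<le> lam0 * (2 * (B1\<^sup>2 + B2) * L2_sqnorm_on support f)"
    using \<open>0 < lam0\<close> abs_integral_weight''_f_sq_le abs_ge_self[of E]
    by (intro mult_left_mono) (auto simp: E_def)
  moreover have "LGam_form \<gamma> (\<lambda>x. \<sigma> x * f x) (\<lambda>x. s1 x * f x + \<sigma> x * f1 x)
      \<ge> 4 * lam0 * H1w_sqnorm weight f f1 + 4 * (lam0 * T) - 2 * (lam0 * E)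
        - (1 / lam0) * (\<integral>x. \<sigma> x * f x * sin (theta_star \<gamma> x) \<partial>lborel)\<^sup>2"
    using lower unfolding H1_sqnorm_localized T_def[symmetric] E_def[symmetric]
    by (simp add: algebra_simps)
  ultimately show ?thesis
    using LGam_wpair_localized[OF assms(1,2)] integral_s1_sq_f_sq_le
    unfolding T_def[symmetric] by (simp add: algebra_simps)
qed

end

end

section \<open>The weighted estimate\<close>

lemma cutoff_psi_localizing_weight:
  assumes "cutoff_psi \<psi>"
  obtains B1 B2
  where "\<And>R y0. 0 < R \<Longrightarrow> \<exists>s1 s2. localizing_weight (\<lambda>x. sqrt (\<psi> ((x - y0) / R))) s1 s2
                                   (B1 / R) (B2 / R\<^sup>2) (y0 - R)"
    and "0 \<le> B2"
proof -
  from assms obtain g1 g2 L where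
    g: "\<And>x. ((\<lambda>x. sqrt (\<psi> x)) has_real_derivative g1 x) (at x)" and
    g1: "\<And>x. (g1 has_real_derivative g2 x) (at x)" and
    g2: "L-lipschitz_on UNIV g2" and
    "bounded (range g1)" "bounded (range g2)" and
    \<psi>_range: "\<And>x. 0 \<le> \<psi> x \<and> \<psi> x \<le> 1" and \<psi>_vanishes: "\<And>x. x \<le> -1 \<Longrightarrow> \<psi> x = 0"
    unfolding cutoff_psi_def W3inf_def by blast
  then obtain B1 B2 where B1: "\<And>x. \<bar>g1 x\<bar> \<le> B1" and B2: "\<And>x. \<bar>g2 x\<bar> \<le> B2"
    unfolding bounded_iff by auto
  have "localizing_weight (\<lambda>x. sqrt (\<psi> ((x - y0) / R))) (\<lambda>x. g1 ((x - y0) / R) / R)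
          (\<lambda>x. g2 ((x - y0) / R) / R\<^sup>2) (B1 / R) (B2 / R\<^sup>2) (y0 - R)"
    if "0 < R" for R y0
  proof
    have scale: "((\<lambda>x. (x - y0) / R) has_real_derivative 1 / R) (at x)" for x
      using that by (auto intro!: derivative_eq_intros)
    show "((\<lambda>x. sqrt (\<psi> ((x - y0) / R))) has_real_derivative g1 ((x - y0) / R) / R) (at x)" for x
      using DERIV_chain2[OF g scale] by simp
    show "((\<lambda>x. g1 ((x - y0) / R) / R) has_real_derivative g2 ((x - y0) / R) / R\<^sup>2) (at x)" for x
      using DERIV_cdivide[OF DERIV_chain2[OF g1 scale], of R] by (simp add: power2_eq_square)
    have "continuous_on UNIV (\<lambda>x. g2 ((x - y0) / R))"
      by (rule continuous_on_compose2[OF lipschitz_on_continuous_on[OF g2]])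
        (use that in \<open>auto intro!: continuous_intros\<close>)
    then show "continuous_on UNIV (\<lambda>x. g2 ((x - y0) / R) / R\<^sup>2)"
      by (rule continuous_on_divide[OF _ continuous_on_const]) (use that in simp)
    show "0 \<le> sqrt (\<psi> ((x - y0) / R))" "sqrt (\<psi> ((x - y0) / R)) \<le> 1" for x
      using \<psi>_range by auto
    show "\<bar>g1 ((x - y0) / R) / R\<bar> \<le> B1 / R" "\<bar>g2 ((x - y0) / R) / R\<^sup>2\<bar> \<le> B2 / R\<^sup>2" for x
      using that divide_right_mono[OF B1, of R] divide_right_mono[OF B2, of "R\<^sup>2"]
      by (simp_all add: abs_divide)
    show "sqrt (\<psi> ((x - y0) / R)) = 0" if "x \<le> y0 - R" for x
    proof -
      have "(x - y0) / R \<le> -1" using \<open>0 < R\<close> that by (simp add: divide_le_eq)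
      then show ?thesis by (simp add: \<psi>_vanishes)
    qed
  qed
  moreover have "0 \<le> B2" using order_trans[OF abs_ge_zero B2] .
  ultimately show ?thesis using that by blast
qed

lemma weighted_form_bounds_at_scale:
  assumes \<gamma>: "-1 < \<gamma>" "\<gamma> < 1" and "0 < lam0"
    and upper: "\<And>v v1. H1 v v1 \<Longrightarrow> LGam_form \<gamma> v v1 \<le> 2 * H1_sqnorm v v1"
    and lower: "\<And>v v1. H1 v v1 \<Longrightarrow> LGam_form \<gamma> v v1 \<ge> 4 * lam0 * H1_sqnorm v v1
            - (1 / lam0) * (\<integral>x. v x * sin (theta_star \<gamma> x) \<partial>lborel)\<^sup>2"
    and \<psi>: "\<And>x. 0 \<le> \<psi> x" and "0 < R"
    and weight: "localizing_weight (\<lambda>x. sqrt (\<psi> ((x - y0) / R))) s1 s2 (B1 / R) (B2 / R\<^sup>2) (y0 - R)"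
    and f: "H2 f f1 f2"
  defines "psi0 \<equiv> \<lambda>x. \<psi> ((x - y0) / R)"
  shows "LGam_wpair \<gamma> psi0 f f2 \<le> 2 * H1w_sqnorm psi0 f f1
           + (3 * B1\<^sup>2 + 2 * B2) / R\<^sup>2 * L2_sqnorm_on (supp_fun (deriv psi0)) f"
    and "LGam_wpair \<gamma> psi0 f f2 \<ge> 4 * lam0 * H1w_sqnorm psi0 f f1
           - (1 / lam0) * (\<integral>x. sqrt (psi0 x) * f x * sin (theta_star \<gamma> x) \<partial>lborel)\<^sup>2
           - (B1\<^sup>2 + 4 * lam0 * (B1\<^sup>2 + B2)) / R\<^sup>2 * L2_sqnorm_on (supp_fun (deriv psi0)) f"
proof -
  interpret W: localizing_weight "\<lambda>x. sqrt (\<psi> ((x - y0) / R))" s1 s2 "B1 / R" "B2 / R\<^sup>2" "y0 - R"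
    by (rule weight)
  have weight_eq: "W.weight = (\<lambda>x. \<psi> ((x - y0) / R))"
    using \<psi> by (auto simp: W.weight_def)
  have "3 * (B1 / R)\<^sup>2 + 2 * (B2 / R\<^sup>2) = (3 * B1\<^sup>2 + 2 * B2) / R\<^sup>2"
    "(B1 / R)\<^sup>2 + 4 * lam0 * ((B1 / R)\<^sup>2 + B2 / R\<^sup>2) = (B1\<^sup>2 + 4 * lam0 * (B1\<^sup>2 + B2)) / R\<^sup>2"
    using \<open>0 < R\<close> by (simp_all add: power_divide field_simps)
  then show "LGam_wpair \<gamma> psi0 f f2 \<le> 2 * H1w_sqnorm psi0 f f1
           + (3 * B1\<^sup>2 + 2 * B2) / R\<^sup>2 * L2_sqnorm_on (supp_fun (deriv psi0)) f"
    and "LGam_wpair \<gamma> psi0 f f2 \<ge> 4 * lam0 * H1w_sqnorm psi0 f f1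
           - (1 / lam0) * (\<integral>x. sqrt (psi0 x) * f x * sin (theta_star \<gamma> x) \<partial>lborel)\<^sup>2
           - (B1\<^sup>2 + 4 * lam0 * (B1\<^sup>2 + B2)) / R\<^sup>2 * L2_sqnorm_on (supp_fun (deriv psi0)) f"
    using W.LGam_wpair_upper_bound[OF f \<gamma> upper[OF W.H1_localized[OF f]]]
      W.LGam_wpair_lower_bound[OF f \<gamma> \<open>0 < lam0\<close> lower[OF W.H1_localized[OF f]]]
    unfolding psi0_def W.support_def weight_eq by simp_all
qed

theorem mainTheorem10:
  fixes \<gamma> lam0 :: real and \<psi> :: "real \<Rightarrow> real"
  assumes "-1 < \<gamma>" "\<gamma> < 1"
    and "lam0 > 0"
    and "\<And>v v1. H1 v v1 \<Longrightarrow> LGam_form \<gamma> v v1 \<le> 2 * H1_sqnorm v v1"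
    and "\<And>v v1. H1 v v1 \<Longrightarrow> LGam_form \<gamma> v v1 \<ge> 4 * lam0 * H1_sqnorm v v1
            - (1 / lam0) * (\<integral>x. v x * sin (theta_star \<gamma> x) \<partial>lborel)\<^sup>2"
    and "cutoff_psi \<psi>"
  shows "\<exists>C>0. \<forall>R\<ge>1. \<forall>y0 f f1 f2. H2 f f1 f2 \<longrightarrow>
     (let psi0 = (\<lambda>x. \<psi> ((x - y0) / R));
          S = supp_fun (deriv psi0) in
        2 * H1w_sqnorm psi0 f f1 + C / R\<^sup>2 * L2_sqnorm_on S f \<ge> LGam_wpair \<gamma> psi0 f f2
      \<and> LGam_wpair \<gamma> psi0 f f2 \<ge> 4 * lam0 * H1w_sqnorm psi0 f f1
            - (1 / lam0) * (\<integral>x. sqrt (psi0 x) * f x * sin (theta_star \<gamma> x) \<partial>lborel)\<^sup>2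
            - C / R\<^sup>2 * L2_sqnorm_on S f)"
proof -
  obtain B1 B2 where weights: "\<And>R y0. 0 < R \<Longrightarrow> \<exists>s1 s2.
      localizing_weight (\<lambda>x. sqrt (\<psi> ((x - y0) / R))) s1 s2 (B1 / R) (B2 / R\<^sup>2) (y0 - R)"
    and "0 \<le> B2"
    using cutoff_psi_localizing_weight[OF assms(6)] by metis
  define C where "C = 3 * B1\<^sup>2 + 2 * B2 + 4 * lam0 * (B1\<^sup>2 + B2) + 1"
  have "0 < C"
    using \<open>0 \<le> B2\<close> \<open>lam0 > 0\<close> zero_le_power2[of B1] unfolding C_def
    by (intro add_nonneg_pos add_nonneg_nonneg mult_nonneg_nonneg) auto
  have constants: "(3 * B1\<^sup>2 + 2 * B2) / R\<^sup>2 * N \<le> C / R\<^sup>2 * N"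
    "(B1\<^sup>2 + 4 * lam0 * (B1\<^sup>2 + B2)) / R\<^sup>2 * N \<le> C / R\<^sup>2 * N" if "0 \<le> N" for R N
    using \<open>0 \<le> B2\<close> \<open>lam0 > 0\<close> that by (auto intro!: mult_right_mono divide_right_mono simp: C_def)
  have \<psi>: "0 \<le> \<psi> x" for x
    using assms(6) by (simp add: cutoff_psi_def)
  show ?thesis
  proof (intro exI[of _ C] conjI allI impI \<open>0 < C\<close>)
    fix R y0 :: real and f f1 f2 :: "real \<Rightarrow> real"
    assume "1 \<le> R" and f: "H2 f f1 f2"
    then obtain s1 s2 where
      "localizing_weight (\<lambda>x. sqrt (\<psi> ((x - y0) / R))) s1 s2 (B1 / R) (B2 / R\<^sup>2) (y0 - R)"
      using weights[of R y0] by auto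
    note bounds = weighted_form_bounds_at_scale[OF assms(1-3) _ _ \<psi> _ this f]
    have "0 < R" using \<open>1 \<le> R\<close> by simp
    note constants = constants[where R = R, OF L2_sqnorm_on_nonneg[of "supp_fun (deriv (\<lambda>x. \<psi> ((x - y0) / R)))" f]]
    show "let psi0 = (\<lambda>x. \<psi> ((x - y0) / R)); S = supp_fun (deriv psi0) in
        2 * H1w_sqnorm psi0 f f1 + C / R\<^sup>2 * L2_sqnorm_on S f \<ge> LGam_wpair \<gamma> psi0 f f2
      \<and> LGam_wpair \<gamma> psi0 f f2 \<ge> 4 * lam0 * H1w_sqnorm psi0 f f1
            - (1 / lam0) * (\<integral>x. sqrt (psi0 x) * f x * sin (theta_star \<gamma> x) \<partial>lborel)\<^sup>2
            - C / R\<^sup>2 * L2_sqnorm_on S f"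
      using bounds[OF assms(4) assms(5) \<open>0 < R\<close>] constants unfolding Let_def by linarith
  qed
qed

end
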